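(* Let $k$ be a positive integer, let $N$ be an integer with $\gcd(N,k!)=1$, and let $A=\{a_1,a_2,\dots,a_n\}\subseteq\mathbb{Z}_N$ be a $k$-fold Sidon set. Let $k_+,k_-$ be integers with $0\leq k_-\leq k_+\leq k$ and $k_++k_-\geq 1$. In the group $G \triangleq \mathbb{Z}_{2(k_++k_-)+1} \times \mathbb{Z}_N$ let \[S\triangleq \{ (1,x) : x \in A\}.\] Then $G \ge [-k_-,k_+]^* \diamond_2 S$.
   Context: $[a,b]=\{a,a+1,\dots,b\}$ and $[a,b]^*=[a,b]\setminus\{0\}$. $k$-fold Sidon sets: let $k\ge1$ and $\gcd(N,k!)=1$. For integers $c_1,c_2,c_3,c_4\in[-k,k]$ with $c_1+c_2+c_3+c_4=0$, let $\mathcal{S}$ be the collection of sets $T\subseteq\{1,2,3,4\}$ such that $\sum_{i\in T}c_i=0$ and $c_i\ne0$ for all $i\in T$ (so $\varnothing\in\mathcal{S}$). A solution $(x_1,x_2,x_3,x_4)\in\mathbb{Z}_N^4$ of $c_1x_1+c_2x_2+c_3x_3+c_4x_4\equiv0\pmod N$ is trivial if there is a partition of $\{i: c_i\ne0\}$ into two sets $T_1,T_2\in\mathcal{S}$ such that $x_i=x_j$ for all $i,j\in T_1$ and for all $i,j\in T_2$. A set $A\subseteq\mathbb{Z}_N$ is a $k$-fold Sidon set if for every such $c_1,\dots,c_4$, this equation has only trivial solutions with $x_1,\dots,x_4\in A$. For a finite Abelian group $G$, a finite set $M\subseteq\mathbb{Z}\setminus\{0\}$ and $S=\{s_1,\dots,s_n\}\subseteq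 G$, we write $G\ge M\diamond_t S$ if the elements $\sum_i e_is_i$, over all $\mathbf{e}\in(M\cup\{0\})^n$ with $1\le\mathrm{wt}(\mathbf{e})\le t$, are all distinct and non-zero in $G$ ($\mathrm{wt}$ = Hamming weight). *)

theory Defs
  imports "HOL-Number_Theory.Number_Theory"
begin

text \<open>Z_N is represented by canonical integer representatives {0..<N}.
  Indices of the linear equation are 1,2,3,4.\<close>

definition zero_sum_sets :: "(nat \<Rightarrow> int) \<Rightarrow> nat set set" where
  "zero_sum_sets c = {T. T \<subseteq> {1..4} \<and> (\<Sum>i\<in>T. c i) = 0 \<and> (\<forall>i\<in>T. c i \<noteq> 0)}"

definition trivial_solution :: "(nat \<Rightarrow> int) \<Rightarrow> (nat \<Rightarrow> int) \<Rightarrow> bool" where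
  "trivial_solution c x \<longleftrightarrow>
     (\<exists>T1 T2. T1 \<in> zero_sum_sets c \<and> T2 \<in> zero_sum_sets c \<and> T1 \<inter> T2 = {} \<and>
        T1 \<union> T2 = {i \<in> {1..4}. c i \<noteq> 0} \<and>
        (\<forall>i\<in>T1. \<forall>j\<in>T1. x i = x j) \<and> (\<forall>i\<in>T2. \<forall>j\<in>T2. x i = x j))"

definition kfold_sidon :: "nat \<Rightarrow> int \<Rightarrow> int set \<Rightarrow> bool" where
  "kfold_sidon k N A \<longleftrightarrow> A \<subseteq> {0..<N} \<and>
     (\<forall>c :: nat \<Rightarrow> int. (\<forall>i\<in>{1..4}. c i \<in> {- int k..int k}) \<and> (\<Sum>i=1..4. c i) = 0 \<longrightarrow>
        (\<forall>x :: nat \<Rightarrow> int. (\<forall>i\<in>{1..4}. x i \<in> A) \<and> [(\<Sum>i=1..4. c i * x i) = 0] (mod N)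
            \<longrightarrow> trivial_solution c x))"

text \<open>The group G = Z_m x Z_N, elements represented by pairs of integers, compared
  componentwise modulo m and N.  For a finite set S of (distinct, canonical)
  representatives, a coefficient vector is a function e : S -> M \<union> {0} (zero outside S).\<close>

definition coeff_vectors :: "int set \<Rightarrow> nat \<Rightarrow> (int \<times> int) set \<Rightarrow> ((int \<times> int) \<Rightarrow> int) set" where
  "coeff_vectors M t S = {e. (\<forall>s\<in>S. e s \<in> insert 0 M) \<and> (\<forall>s. s \<notin> S \<longrightarrow> e s = 0) \<and>
        1 \<le> card {s\<in>S. e s \<noteq> 0} \<and> card {s\<in>S. e s \<noteq> 0} \<le> t}"

definition lin_comb :: "int \<Rightarrow> int \<Rightarrow> (int \<times> int) set \<Rightarrow> ((int \<times> int) \<Rightarrow> int) \<Rightarrow> int \<times> int" where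
  "lin_comb m N S e = ((\<Sum>s\<in>S. e s * fst s) mod m, (\<Sum>s\<in>S. e s * snd s) mod N)"

definition diamond_ge :: "int \<Rightarrow> int \<Rightarrow> int set \<Rightarrow> nat \<Rightarrow> (int \<times> int) set \<Rightarrow> bool" where
  "diamond_ge m N M t S \<longleftrightarrow>
     inj_on (lin_comb m N S) (coeff_vectors M t S) \<and>
     (\<forall>e\<in>coeff_vectors M t S. lin_comb m N S e \<noteq> (0, 0))"

end

theory Submission
  imports Defs
begin

text \<open>A vector of weight at most two on \<open>S = {(1, x) | x. x \<in> A}\<close> is \<open>a\<^sub>1 [x\<^sub>1] + a\<^sub>2 [x\<^sub>2]\<close>.
  Its image in \<open>\<int>\<^sub>m \<times> \<int>\<^sub>N\<close> is \<open>(a\<^sub>1 + a\<^sub>2, a\<^sub>1 x\<^sub>1 + a\<^sub>2 x\<^sub>2)\<close>. If two such vectors have the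
  same image, the first coordinates give \<open>a\<^sub>1 + a\<^sub>2 = b\<^sub>1 + b\<^sub>2\<close> exactly, because all coefficients
  lie in \<open>[-k\<^sub>-, k\<^sub>+]\<close> and \<open>m = 2(k\<^sub>+ + k\<^sub>-) + 1\<close>. The second coordinates then give a solution
  of \<open>a\<^sub>1 x\<^sub>1 + a\<^sub>2 x\<^sub>2 - b\<^sub>1 y\<^sub>1 - b\<^sub>2 y\<^sub>2 \<equiv> 0\<close> with zero coefficient sum, which is trivial by the
  \<open>k\<close>-fold Sidon property; a trivial solution puts the same total coefficient on every point
  on both sides, so the two vectors coincide. Non-vanishing is injectivity against the zero
  vector.\<close>

lemma trivial_solution_sum_at_value:
  assumes "trivial_solution c x"
  shows "(\<Sum>i=1..4. if x i = v then c i else 0) = 0"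
proof -
  obtain T1 T2 where T: "T1 \<in> zero_sum_sets c" "T2 \<in> zero_sum_sets c"
    and disj: "T1 \<inter> T2 = {}" and cover: "T1 \<union> T2 = {i \<in> {1..4}. c i \<noteq> 0}"
    and const: "\<forall>i\<in>T1. \<forall>j\<in>T1. x i = x j" "\<forall>i\<in>T2. \<forall>j\<in>T2. x i = x j"
    using assms unfolding trivial_solution_def by blast
  have part_sum: "(\<Sum>i\<in>T. if x i = v then c i else 0) = 0"
    if "T \<in> zero_sum_sets c" "\<forall>i\<in>T. \<forall>j\<in>T. x i = x j" for T
  proof (cases "\<exists>j\<in>T. x j = v")
    case True
    with that(2) have "\<forall>i\<in>T. x i = v" by blast
    then have "(\<Sum>i\<in>T. if x i = v then c i else 0) = (\<Sum>i\<in>T. c i)"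
      by (intro sum.cong) simp_all
    with that(1) show ?thesis by (simp add: zero_sum_sets_def)
  next
    case False
    then show ?thesis by (intro sum.neutral) auto
  qed
  have "T1 \<subseteq> {1..4}" "T2 \<subseteq> {1..4}"
    using T by (simp_all add: zero_sum_sets_def)
  then have fin: "finite T1" "finite T2"
    by (meson finite_atLeastAtMost finite_subset)+
  have "(\<Sum>i=1..4. if x i = v then c i else 0) = (\<Sum>i\<in>T1 \<union> T2. if x i = v then c i else 0)"
    unfolding cover by (intro sum.mono_neutral_right) auto
  also have "\<dots> = 0"
    using part_sum[OF T(1) const(1)] part_sum[OF T(2) const(2)] by (simp add: sum.union_disjoint fin disj)
  finally show ?thesis .
qed

lemma kfold_sidon_two_term_eq:
  assumes "kfold_sidon k N A"
    and "x1 \<in> A" "x2 \<in> A" "y1 \<in> A" "y2 \<in> A"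
    and "{a1, a2, b1, b2} \<subseteq> {- int k..int k}"
    and "a1 + a2 = b1 + b2"
    and "[a1 * x1 + a2 * x2 = b1 * y1 + b2 * y2] (mod N)"
  shows "(if v = x1 then a1 else 0) + (if v = x2 then a2 else 0) =
         (if v = y1 then b1 else 0) + (if v = y2 then b2 else 0)"
proof -
  define c :: "nat \<Rightarrow> int" where
    "c i = (if i = 1 then a1 else if i = 2 then a2 else if i = 3 then - b1 else - b2)" for i
  define x :: "nat \<Rightarrow> int" where
    "x i = (if i = 1 then x1 else if i = 2 then x2 else if i = 3 then y1 else y2)" for i
  have sum4: "(\<Sum>i=1..4. f i) = f 1 + f 2 + f 3 + f (4 :: nat)" for f :: "nat \<Rightarrow> int"
    by (simp add: eval_nat_numeral atLeastAtMostSuc_conv ac_simps)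
  have "(\<forall>i\<in>{1..4}. c i \<in> {- int k..int k}) \<and> (\<Sum>i=1..4. c i) = 0"
    unfolding sum4 using assms(6,7) by (auto simp: c_def)
  moreover have "(\<forall>i\<in>{1..4}. x i \<in> A) \<and> [(\<Sum>i=1..4. c i * x i) = 0] (mod N)"
    unfolding sum4 using assms(2-5,8) by (auto simp: c_def x_def cong_iff_dvd_diff diff_diff_eq)
  ultimately have trivial: "trivial_solution c x"
    using assms(1) unfolding kfold_sidon_def by blast
  have c_values: "c 1 = a1" "c 2 = a2" "c 3 = - b1" "c 4 = - b2"
    and x_values: "x 1 = x1" "x 2 = x2" "x 3 = y1" "x 4 = y2"
    by (simp_all add: c_def x_def)
  from trivial_solution_sum_at_value[OF trivial, of v, unfolded sum4 c_values x_values]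
  show ?thesis by (simp split: if_splits)
qed

lemma eq_if_mod_eq_abs_diff_less:
  fixes a b m :: int
  assumes "a mod m = b mod m" "\<bar>a - b\<bar> < m"
  shows "a = b"
proof (rule ccontr)
  assume "a \<noteq> b"
  moreover have "m dvd a - b"
    using assms(1) by (simp add: mod_eq_dvd_iff)
  ultimately have "\<bar>m\<bar> \<le> \<bar>a - b\<bar>"
    by (simp add: dvd_imp_le_int)
  with assms(2) show False by simp
qed

lemma support_card_le_2_cases:
  fixes f :: "'a \<Rightarrow> 'b::comm_monoid_add"
  assumes "finite A" "A \<noteq> {}" "card {x \<in> A. f x \<noteq> 0} \<le> 2"
    and "\<forall>x\<in>A. f x \<in> B" "0 \<in> B"
  obtains x1 x2 a1 a2 where "x1 \<in> A" "x2 \<in> A" "a1 \<in> B" "a2 \<in> B"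
    "\<forall>x\<in>A. f x = (if x = x1 then a1 else 0) + (if x = x2 then a2 else 0)"
proof -
  define D where "D = {x \<in> A. f x \<noteq> 0}"
  have "finite D" using assms(1) by (simp add: D_def)
  consider "card D = 0" | "card D = 1" | "card D = 2"
    using assms(3) unfolding D_def by linarith
  then show ?thesis
  proof cases
    case 1
    with \<open>finite D\<close> have "\<forall>x\<in>A. f x = 0" by (simp add: D_def)
    moreover obtain x0 where "x0 \<in> A" using assms(2) by blast
    ultimately show ?thesis
      by (intro that[of x0 x0 0 0]) (simp_all add: assms(5))
  next
    case 2
    then obtain u where "D = {u}" by (rule card_1_singletonE)
    then have "u \<in> A" "\<forall>x\<in>A. x \<noteq> u \<longrightarrow> f x = 0" unfolding D_def by blast+
    then show ?thesis
      by (intro that[of u u "f u" 0]) (simp_all add: assms(4,5))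
  next
    case 3
    then obtain u w where "D = {u, w}" "u \<noteq> w" by (meson card_2_iff)
    then have "u \<in> A" "w \<in> A" "\<forall>x\<in>A. x \<noteq> u \<and> x \<noteq> w \<longrightarrow> f x = 0"
      unfolding D_def by blast+
    then show ?thesis
      using \<open>u \<noteq> w\<close> by (intro that[of u w "f u" "f w"]) (auto simp: assms(4))
  qed
qed

lemma lin_comb_weight_2:
  assumes "finite A" "x1 \<in> A" "x2 \<in> A"
    and "\<forall>x\<in>A. e (1, x) = (if x = x1 then a1 else 0) + (if x = x2 then a2 else 0)"
  shows "lin_comb m N {(1, x) | x. x \<in> A} e = ((a1 + a2) mod m, (a1 * x1 + a2 * x2) mod N)"
proof -
  have S: "{(1, x) | x. x \<in> A} = Pair 1 ` A" by auto
  have "(\<Sum>x\<in>A. e (1, x) * g x) = a1 * g x1 + a2 * g x2" for g :: "int \<Rightarrow> int"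
  proof -
    have "(\<Sum>x\<in>A. e (1, x) * g x) =
          (\<Sum>x\<in>A. (if x = x1 then a1 * g x else 0) + (if x = x2 then a2 * g x else 0))"
      using assms(4) by (intro sum.cong) (auto simp: distrib_right)
    also have "\<dots> = a1 * g x1 + a2 * g x2"
      using assms(1-3) by (cases "x1 = x2") (simp_all add: sum.distrib algebra_simps)
    finally show ?thesis .
  qed
  from this[of "\<lambda>_. 1"] this[of id] show ?thesis
    unfolding lin_comb_def S by (simp add: sum.reindex inj_on_def)
qed

lemma coeff_vectors_Pair_1D:
  assumes "e \<in> insert (\<lambda>_. 0) (coeff_vectors M 2 {(1, x) | x. x \<in> A})"
  shows "\<forall>x\<in>A. e (1, x) \<in> insert 0 M" "card {x \<in> A. e (1, x) \<noteq> 0} \<le> 2"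
    "\<forall>s. s \<notin> {(1, x) | x. x \<in> A} \<longrightarrow> e s = 0"
proof -
  have "{s \<in> {(1, x) | x. x \<in> A}. e s \<noteq> 0} = Pair 1 ` {x \<in> A. e (1, x) \<noteq> 0}" by auto
  then have "card {s \<in> {(1, x) | x. x \<in> A}. e s \<noteq> 0} = card {x \<in> A. e (1, x) \<noteq> 0}"
    by (simp add: card_image inj_on_def)
  with assms show "card {x \<in> A. e (1, x) \<noteq> 0} \<le> 2"
    by (auto simp: coeff_vectors_def)
  show "\<forall>x\<in>A. e (1, x) \<in> insert 0 M" "\<forall>s. s \<notin> {(1, x) | x. x \<in> A} \<longrightarrow> e s = 0"
    using assms by (auto simp: coeff_vectors_def)
qed

lemma lin_comb_inj_on_weight_le_2:
  fixes k kp km :: nat and m :: int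
  assumes sidon: "kfold_sidon k N A" and "finite A" "A \<noteq> {}"
    and "km \<le> k" "kp \<le> k" "M \<subseteq> {- int km..int kp}" "2 * int (kp + km) < m"
  defines "S \<equiv> {(1, x) | x. x \<in> A}"
  shows "inj_on (lin_comb m N S) (insert (\<lambda>_. 0) (coeff_vectors M 2 S))"
proof (rule inj_onI)
  fix e e' assume e: "e \<in> insert (\<lambda>_. 0) (coeff_vectors M 2 S)"
    and e': "e' \<in> insert (\<lambda>_. 0) (coeff_vectors M 2 S)"
    and same_image: "lin_comb m N S e = lin_comb m N S e'"
  obtain x1 x2 a1 a2 where x: "x1 \<in> A" "x2 \<in> A" and a: "a1 \<in> insert 0 M" "a2 \<in> insert 0 M"
    and e_on_S: "\<forall>x\<in>A. e (1, x) = (if x = x1 then a1 else 0) + (if x = x2 then a2 else 0)"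
    by (rule support_card_le_2_cases[OF assms(2,3) coeff_vectors_Pair_1D(2,1)[OF e[unfolded S_def]] insertI1])
  obtain y1 y2 b1 b2 where y: "y1 \<in> A" "y2 \<in> A" and b: "b1 \<in> insert 0 M" "b2 \<in> insert 0 M"
    and e'_on_S: "\<forall>x\<in>A. e' (1, x) = (if x = y1 then b1 else 0) + (if x = y2 then b2 else 0)"
    by (rule support_card_le_2_cases[OF assms(2,3) coeff_vectors_Pair_1D(2,1)[OF e'[unfolded S_def]] insertI1])
  have "insert 0 M \<subseteq> {- int km..int kp}"
    using assms(6) by simp
  with a b have coeffs: "{a1, a2, b1, b2} \<subseteq> {- int km..int kp}"
    by blast
  then have coeffs_k: "{a1, a2, b1, b2} \<subseteq> {- int k..int k}"
    using assms(4,5) by force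
  have first: "(a1 + a2) mod m = (b1 + b2) mod m"
    and second: "(a1 * x1 + a2 * x2) mod N = (b1 * y1 + b2 * y2) mod N"
    using same_image unfolding S_def lin_comb_weight_2[OF assms(2) x e_on_S] lin_comb_weight_2[OF assms(2) y e'_on_S]
    by simp_all
  have "\<bar>(a1 + a2) - (b1 + b2)\<bar> < m"
    using coeffs assms(7) by (simp add: abs_less_iff)
  with first have sum_eq: "a1 + a2 = b1 + b2"
    by (rule eq_if_mod_eq_abs_diff_less)
  have values_eq: "e (1, v) = e' (1, v)" if "v \<in> A" for v
  proof -
    have "e (1, v) = (if v = x1 then a1 else 0) + (if v = x2 then a2 else 0)"
      using e_on_S that by blast
    also have "\<dots> = (if v = y1 then b1 else 0) + (if v = y2 then b2 else 0)"
      using kfold_sidon_two_term_eq[OF sidon x y coeffs_k sum_eq] second by (simp add: cong_def)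
    also have "\<dots> = e' (1, v)"
      using e'_on_S that by simp
    finally show ?thesis .
  qed
  have outside_S: "e s = 0" "e' s = 0" if "s \<notin> S" for s
    using that coeff_vectors_Pair_1D(3) e e' unfolding S_def by blast+
  show "e = e'"
  proof
    fix s
    show "e s = e' s"
    proof (cases "s \<in> S")
      case True
      then obtain v where "v \<in> A" "s = (1, v)" unfolding S_def by blast
      then show ?thesis by (simp add: values_eq)
    next
      case False
      then show ?thesis by (simp add: outside_S)
    qed
  qed
qed

theorem theorem10:
  fixes k kp km :: nat and N :: int and A :: "int set"
  assumes "k \<ge> 1"
    and "N \<ge> 1"
    and "gcd N (fact k) = 1"
    and "finite A"
    and "kfold_sidon k N A"
    and "km \<le> kp" and "kp \<le> k" and "kp + km \<ge> 1"
  shows "diamond_ge (2 * int (kp + km) + 1) N ({- int km..int kp} - {0}) 2 {(1, x) | x. x \<in> A}"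
proof (cases "A = {}")
  case True
  then show ?thesis by (simp add: diamond_ge_def coeff_vectors_def)
next
  case False
  define m where "m = 2 * int (kp + km) + 1"
  define M where "M = {- int km..int kp} - {0}"
  define S where "S = {(1::int, x) | x. x \<in> A}"
  have "km \<le> k" "M \<subseteq> {- int km..int kp}" "2 * int (kp + km) < m"
    using assms(6,7) unfolding M_def m_def by auto
  then have inj: "inj_on (lin_comb m N S) (insert (\<lambda>_. 0) (coeff_vectors M 2 S))"
    unfolding S_def using assms(4,5,7) False by (intro lin_comb_inj_on_weight_le_2)
  have nonzero: "lin_comb m N S e \<noteq> (0, 0)" if "e \<in> coeff_vectors M 2 S" for e
  proof
    assume "lin_comb m N S e = (0, 0)"
    then have "lin_comb m N S e = lin_comb m N S (\<lambda>_. 0)"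
      by (simp add: lin_comb_def)
    then have "e = (\<lambda>_. 0)"
      by (rule inj_onD[OF inj]) (simp_all add: that)
    with that show False by (simp add: coeff_vectors_def)
  qed
  show ?thesis
    unfolding diamond_ge_def m_def[symmetric] M_def[symmetric] S_def[symmetric]
    using inj_on_subset[OF inj subset_insertI] nonzero by blast
qed

end
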